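(* Let $A$ be a finite set of options containing a default option $0$, let $v$ be a Llull matrix on $A$ with path scores $v^*$, and let $D(z)$ be as in the context. Let $x,y\in A$ be distinct. If $D(x)\ge0$ and $D(x)>D(y)$, then $D(x)\ge v^*_{yx}-v^*_{xy}$. If moreover $D(x)>0$, then $D(x)>v^*_{yx}-v^*_{xy}$.
   Context: A Llull matrix on $A$ is a family of real numbers $v_{xy}\in[0,1]$, indexed by ordered pairs $(x,y)$ of distinct elements of $A$, with $v_{xy}+v_{yx}\le1$. Path scores: $v^*_{xy}=\max\min(v_{x_0x_1},\dots,v_{x_{m-1}x_m})$ over all paths $x_0\dots x_m$ ($m\ge1$, $x_0=x$, $x_m=y$, $x_i$ pairwise distinct). For $z\in A$, $D(z)=v^*_{z0}-v^*_{0z}$ if $z\ne0$ and $D(0)=0$. *)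

theory Defs
  imports Complex_Main
begin

definition llull_matrix :: "'a set \<Rightarrow> ('a \<Rightarrow> 'a \<Rightarrow> real) \<Rightarrow> bool" where
  "llull_matrix A v \<longleftrightarrow>
     (\<forall>x\<in>A. \<forall>y\<in>A. x \<noteq> y \<longrightarrow> 0 \<le> v x y \<and> v x y \<le> 1 \<and> v x y + v y x \<le> 1)"

definition llull_path :: "'a set \<Rightarrow> 'a \<Rightarrow> 'a \<Rightarrow> 'a list \<Rightarrow> bool" where
  "llull_path A x y p \<longleftrightarrow>
     2 \<le> length p \<and> hd p = x \<and> last p = y \<and> distinct p \<and> set p \<subseteq> A"

definition path_score :: "('a \<Rightarrow> 'a \<Rightarrow> real) \<Rightarrow> 'a list \<Rightarrow> real" where
  "path_score v p = Min ((\<lambda>(a, b). v a b) ` set (zip p (tl p)))"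

definition vstar :: "'a set \<Rightarrow> ('a \<Rightarrow> 'a \<Rightarrow> real) \<Rightarrow> 'a \<Rightarrow> 'a \<Rightarrow> real" where
  "vstar A v x y = Max (path_score v ` {p. llull_path A x y p})"

text \<open>D(z) = v*_{z0} - v*_{0z} for z distinct from the default option 0 (here d0), D(0) = 0.\<close>
definition Dfun :: "'a set \<Rightarrow> ('a \<Rightarrow> 'a \<Rightarrow> real) \<Rightarrow> 'a \<Rightarrow> 'a \<Rightarrow> real" where
  "Dfun A v d0 z = (if z = d0 then 0 else vstar A v z d0 - vstar A v d0 z)"

end

theory Submission
  imports Defs
begin

text \<open>Concatenating a best path from a to b with a best path from b to c and cutting out
  the cycles gives a path from a to c all of whose links are links of the two pieces, so
  the path scores are min-transitive: min (v*ab) (v*bc) \<le> v*ac. Among x, y and the default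
  option 0 this yields six inequalities, and the claim follows from them by a case analysis
  on which value is the smallest.\<close>

fun links :: "'a list \<Rightarrow> ('a \<times> 'a) set" where
  "links (a # b # r) = insert (a, b) (links (b # r))"
| "links _ = {}"

lemma links_eq_set_zip_tl: "links p = set (zip p (tl p))"
  by (induction p rule: links.induct) auto

lemma finite_links: "finite (links p)"
  by (induction p rule: links.induct) auto

lemma links_nonempty: "2 \<le> length p \<Longrightarrow> links p \<noteq> {}"
  by (cases p rule: links.cases) auto

lemma links_append_Cons: "links (xs @ u # r) = links (xs @ [u]) \<union> links (u # r)"
proof (induction xs)
  case (Cons a xs)
  then show ?case by (cases xs) auto
qed simp

lemma distinct_shortcut:
  assumes "w \<noteq> []"
  shows "\<exists>p. distinct p \<and> p \<noteq> [] \<and> hd p = hd w \<and> last p = last w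
           \<and> set p \<subseteq> set w \<and> links p \<subseteq> links w"
  using assms
proof (induction "length w" arbitrary: w rule: less_induct)
  case less
  show ?case
  proof (cases "distinct w")
    case False
    then obtain xs ys zs u where w: "w = xs @ [u] @ ys @ [u] @ zs"
      using not_distinct_decomp by blast
    define w' where "w' = xs @ [u] @ zs"
    have "length w' < length w" "w' \<noteq> []" using w w'_def by simp_all
    then obtain p where p: "distinct p" "p \<noteq> []" "hd p = hd w'" "last p = last w'"
        "set p \<subseteq> set w'" "links p \<subseteq> links w'"
      using less.hyps by blast
    have "hd w' = hd w" using w w'_def by (cases xs) auto
    moreover have "last w' = last w" using w w'_def by (cases zs rule: rev_cases) auto
    moreover have "set w' \<subseteq> set w" using w w'_def by auto
    moreover have "links w' \<subseteq> links w"
      using links_append_Cons[of xs u zs] links_append_Cons[of xs u "ys @ u # zs"]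
        links_append_Cons[of "u # ys" u zs]
      by (simp add: w w'_def) blast
    ultimately show ?thesis using p by (intro exI[of _ p]) auto
  qed (use less.prems in blast)
qed

lemma finite_llull_paths:
  assumes "finite A"
  shows "finite {p. llull_path A a c p}"
proof -
  have "{p. llull_path A a c p} \<subseteq> {xs. set xs \<subseteq> A \<and> length xs \<le> card A}"
    unfolding llull_path_def by (auto simp: distinct_card[symmetric] intro: card_mono[OF assms])
  then show ?thesis using finite_lists_length_le[OF assms] finite_subset by blast
qed

lemma path_score_le_vstar:
  assumes "finite A" "llull_path A a c p"
  shows "path_score v p \<le> vstar A v a c"
  unfolding vstar_def using finite_llull_paths[OF assms(1)] assms(2) by (intro Max_ge) auto

lemma vstar_attained:
  assumes "finite A" "a \<in> A" "c \<in> A" "a \<noteq> c"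
  obtains p where "llull_path A a c p" "path_score v p = vstar A v a c"
proof -
  have "llull_path A a c [a, c]" using assms unfolding llull_path_def by auto
  then have "vstar A v a c \<in> path_score v ` {p. llull_path A a c p}"
    unfolding vstar_def using finite_llull_paths[OF assms(1)] by (intro Max_in) auto
  then show ?thesis using that by auto
qed

lemma path_score_le_link:
  assumes "(s, t) \<in> links p"
  shows "path_score v p \<le> v s t"
  unfolding path_score_def links_eq_set_zip_tl[symmetric]
  using assms finite_links by (intro Min_le) (auto intro: rev_image_eqI)

lemma le_path_score:
  assumes "2 \<le> length p" "\<And>s t. (s, t) \<in> links p \<Longrightarrow> m \<le> v s t"
  shows "m \<le> path_score v p"
  unfolding path_score_def links_eq_set_zip_tl[symmetric]
  using assms finite_links[of p] links_nonempty[OF assms(1)] by (subst Min_ge_iff) auto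

lemma vstar_min_trans:
  assumes "finite A" "a \<in> A" "b \<in> A" "c \<in> A" "a \<noteq> b" "b \<noteq> c" "a \<noteq> c"
  shows "min (vstar A v a b) (vstar A v b c) \<le> vstar A v a c"
proof -
  obtain p1 where p1: "llull_path A a b p1" "path_score v p1 = vstar A v a b"
    using vstar_attained assms by metis
  obtain p2 where p2: "llull_path A b c p2" "path_score v p2 = vstar A v b c"
    using vstar_attained assms by metis
  obtain xs where xs: "p1 = xs @ [b]" using p1(1) unfolding llull_path_def
    by (metis append_butlast_last_id list.size(3) not_numeral_le_zero)
  obtain r where r: "p2 = b # r" using p2(1) unfolding llull_path_def
    by (metis list.collapse list.size(3) not_numeral_le_zero)
  define w where "w = xs @ b # r"
  have links_w: "links w = links p1 \<union> links p2"
    using w_def xs r links_append_Cons by simp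
  have "hd w = a" using p1(1) xs w_def unfolding llull_path_def by (cases xs) auto
  moreover have "last w = c" using p2(1) r w_def unfolding llull_path_def by (cases r) auto
  ultimately obtain p where p: "distinct p" "p \<noteq> []" "hd p = a" "last p = c"
      "set p \<subseteq> set w" "links p \<subseteq> links w"
    using distinct_shortcut[of w] w_def by auto
  have "2 \<le> length p" using p(2-4) assms(7) by (cases p; cases "tl p") auto
  with p have path: "llull_path A a c p"
    using p1(1) p2(1) xs r w_def unfolding llull_path_def by (auto simp: Suc_le_eq)
  have "min (vstar A v a b) (vstar A v b c) \<le> path_score v p"
  proof (rule le_path_score)
    show "2 \<le> length p" using path unfolding llull_path_def by simp
    fix s t assume "(s, t) \<in> links p"
    then have "(s, t) \<in> links p1 \<or> (s, t) \<in> links p2" using p(6) links_w by blast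
    then show "min (vstar A v a b) (vstar A v b c) \<le> v s t"
      using path_score_le_link[of s t p1 v] path_score_le_link[of s t p2 v] p1(2) p2(2)
      by linarith
  qed
  also have "\<dots> \<le> vstar A v a c" using path_score_le_vstar[OF assms(1) path] .
  finally show ?thesis .
qed

text \<open>With a = v*x0, b = v*0x, c = v*y0, d = v*0y, p = v*xy, q = v*yx, the hypotheses are
  the six min-transitivity inequalities among x, y, 0.\<close>

lemma min_trans_margin_bound:
  fixes a b c d p q :: real
  assumes "min q a \<le> c" "min p c \<le> a" "min d q \<le> b" "min b p \<le> d"
    "min a d \<le> p" "min c b \<le> q" "a - b \<ge> 0" "a - b > c - d"
  shows "a - b \<ge> q - p \<and> (a - b > 0 \<longrightarrow> a - b > q - p)"
  using assms by (auto simp: min_def split: if_splits)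

theorem theorem3p5:
  fixes A :: "'a set" and v :: "'a \<Rightarrow> 'a \<Rightarrow> real" and d0 x y :: 'a
  assumes "finite A" and "d0 \<in> A" and "llull_matrix A v"
    and "x \<in> A" and "y \<in> A" and "x \<noteq> y"
    and "Dfun A v d0 x \<ge> 0" and "Dfun A v d0 x > Dfun A v d0 y"
  shows "Dfun A v d0 x \<ge> vstar A v y x - vstar A v x y
         \<and> (Dfun A v d0 x > 0 \<longrightarrow> Dfun A v d0 x > vstar A v y x - vstar A v x y)"
proof -
  consider "x = d0" | "y = d0" | "x \<noteq> d0" "y \<noteq> d0" by blast
  then show ?thesis
  proof cases
    case 3
    have min_trans: "min (vstar A v a b) (vstar A v b c) \<le> vstar A v a c"
      if "{a, b, c} \<subseteq> {x, y, d0}" "a \<noteq> b" "b \<noteq> c" "a \<noteq> c" for a b c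
      using that assms(1,2,4,5) by (intro vstar_min_trans) auto
    have "Dfun A v d0 x = vstar A v x d0 - vstar A v d0 x"
      "Dfun A v d0 y = vstar A v y d0 - vstar A v d0 y"
      using 3 unfolding Dfun_def by simp_all
    moreover have "vstar A v x d0 - vstar A v d0 x \<ge> vstar A v y x - vstar A v x y \<and>
        (vstar A v x d0 - vstar A v d0 x > 0 \<longrightarrow>
         vstar A v x d0 - vstar A v d0 x > vstar A v y x - vstar A v x y)"
    proof (rule min_trans_margin_bound)
      show "0 \<le> vstar A v x d0 - vstar A v d0 x"
        "vstar A v y d0 - vstar A v d0 y < vstar A v x d0 - vstar A v d0 x"
        using assms(7,8) 3 by (simp_all add: Dfun_def)
    qed (rule min_trans; use 3 assms(6) in auto)+
    ultimately show ?thesis by simp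
  qed (use assms(6,8) in \<open>auto simp: Dfun_def\<close>)
qed

end
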